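(* Let $\ell\geq 1$ be an integer and $m=2\ell+1$. Then for every $\epsilon\in\mathrm{GF}(3)^*=\{1,2\}$, the equation $$(x^{3^\ell}+\epsilon)(x^{3^\ell}-x)=1$$ has no solution $x\in\mathrm{GF}(3^m)^*$.
   Context: $\mathrm{GF}(q)$ denotes the finite field with $q$ elements and $\mathrm{GF}(q)^*=\mathrm{GF}(q)\setminus\{0\}$. *)

theory Defs
  imports Main
begin

end

theory Submission
  imports Defs "HOL-Computational_Algebra.Primes"
begin

text \<open>Let \<open>\<sigma> y = y ^ 3 ^ (l + 1)\<close>. As the field has \<open>3 ^ (2 * l + 1)\<close> elements, \<sigma> is a
  field automorphism with \<open>\<sigma> (\<sigma> y) = y ^ 3\<close> and \<open>\<sigma> (x ^ 3 ^ l) = x\<close>. For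
  \<open>u = x ^ 3 ^ l + \<epsilon>\<close> the equation becomes \<open>\<sigma> u * u = u\<^sup>2 - 1\<close>, and applying \<sigma> gives
  \<open>u ^ 3 * \<sigma> u = (\<sigma> u)\<^sup>2 - 1\<close>. Eliminating \<open>\<sigma> u\<close> yields \<open>u ^ 6 + u ^ 4 = 1\<close> in characteristic 3,
  so \<open>u\<close> lies in the subfield with 27 elements and \<open>\<sigma> u = u ^ 3 ^ r\<close> with \<open>r = (l + 1) mod 3\<close>;
  each of the three possible values of \<open>r\<close> contradicts \<open>\<sigma> u * u = u\<^sup>2 - 1\<close>.\<close>

lemma of_nat_card_UNIV_eq_0: "of_nat (card (UNIV :: 'a::{ring_1,finite} set)) = (0 :: 'a)"
proof -
  have "(\<Sum>w\<in>UNIV. w + 1) = (\<Sum>w\<in>UNIV. w :: 'a)"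
    by (rule sum.reindex_bij_witness[of _ "\<lambda>w. w - 1" "\<lambda>w. w + 1"]) auto
  then show ?thesis
    by (simp add: sum.distrib)
qed

lemma prime_CHAR_finite_field: "prime CHAR('a::{field,finite})"
  by (rule prime_CHAR_semidom, rule finite_imp_CHAR_pos) simp

lemma CHAR_eq_if_card_eq_prime_power:
  assumes "prime p" and "card (UNIV :: 'a::{field,finite} set) = p ^ m"
  shows "CHAR('a) = p"
proof -
  have "CHAR('a) dvd p ^ m"
    using of_nat_card_UNIV_eq_0[where 'a = 'a] assms(2) of_nat_eq_0_iff_char_dvd by metis
  then have "CHAR('a) dvd p"
    using prime_CHAR_finite_field[where 'a = 'a] prime_dvd_power by blast
  then show ?thesis
    using prime_CHAR_finite_field[where 'a = 'a] assms(1) by (simp add: primes_dvd_imp_eq)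
qed

lemma field_power_card_eq_same:
  fixes y :: "'a::{field,finite}"
  shows "y ^ card (UNIV :: 'a set) = y"
proof (cases "y = 0")
  case False
  let ?U = "UNIV - {0::'a}"
  have card_pos: "card (UNIV :: 'a set) > 0"
    by (simp add: card_gt_0_iff)
  have "(\<Prod>w\<in>?U. y * w) = (\<Prod>w\<in>?U. w)"
    by (rule prod.reindex_bij_witness[of _ "\<lambda>w. w / y" "\<lambda>w. y * w"]) (use False in auto)
  then have unit: "y ^ card ?U = 1"
    by (simp add: prod.distrib)
  have card_eq: "card (UNIV :: 'a set) = card ?U + 1"
    using card_pos by (simp add: card_Diff_singleton)
  have "y ^ card (UNIV :: 'a set) = y ^ card ?U * y"
    unfolding card_eq by (simp only: power_add power_one_right)
  then show ?thesis
    using unit by simp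
qed (simp add: card_gt_0_iff)

lemma (in comm_ring_1) freshmans_dream_minus:
  assumes "prime CHAR('a)" and "m = CHAR('a) ^ n"
  shows "(x - y) ^ m = x ^ m - y ^ m"
  using freshmans_dream'[OF assms, of "x - y" y] by (simp add: algebra_simps)

lemma power_power_eq_mod_period:
  fixes u :: "'a::monoid_mult"
  assumes "u ^ (b ^ n) = u"
  shows "u ^ (b ^ k) = u ^ (b ^ (k mod n))"
proof (induction k rule: less_induct)
  case (less k)
  show ?case
  proof (cases "n \<le> k \<and> 0 < n")
    case True
    then have "u ^ (b ^ k) = (u ^ (b ^ n)) ^ (b ^ (k - n))"
      by (metis le_add_diff_inverse power_add power_mult)
    also have "\<dots> = u ^ (b ^ ((k - n) mod n))"
      using assms less True by simp
    finally show ?thesis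
      using True by (simp add: le_mod_geq)
  next
    case False
    then have "k mod n = k"
      by auto
    then show ?thesis
      by simp
  qed
qed

lemma power_card_odd_exponent:
  fixes y :: "'a::{field,finite}"
  assumes "card (UNIV :: 'a set) = p ^ (2 * l + 1)"
  shows "(y ^ (p ^ (l + 1))) ^ (p ^ (l + 1)) = y ^ p"
    and "(y ^ (p ^ l)) ^ (p ^ (l + 1)) = y"
proof -
  have "p ^ (l + 1) * p ^ (l + 1) = p ^ (2 * l + 1) * p"
    by (simp only: mult_2 power_add) (simp add: ac_simps)
  then show "(y ^ (p ^ (l + 1))) ^ (p ^ (l + 1)) = y ^ p"
    by (metis assms field_power_card_eq_same power_mult)
  have "p ^ l * p ^ (l + 1) = p ^ (2 * l + 1)"
    by (simp only: mult_2 power_add)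
  then show "(y ^ (p ^ l)) ^ (p ^ (l + 1)) = y"
    by (metis assms field_power_card_eq_same power_mult)
qed

lemma frobenius_relations_if_equation:
  fixes x e :: "'a::{field,finite}"
  assumes card: "card (UNIV :: 'a set) = p ^ (2 * l + 1)" and CHAR: "CHAR('a) = p"
    and e: "e ^ p = e" and eq: "(x ^ (p ^ l) + e) * (x ^ (p ^ l) - x) = 1"
  defines "u \<equiv> x ^ (p ^ l) + e"
  shows "u ^ (p ^ (l + 1)) * u = u\<^sup>2 - 1"
    and "u ^ p * u ^ (p ^ (l + 1)) = (u ^ (p ^ (l + 1)))\<^sup>2 - 1"
proof -
  define \<sigma> where "\<sigma> y = y ^ (p ^ (l + 1))" for y :: 'a
  have prime: "prime CHAR('a)"
    by (rule prime_CHAR_finite_field)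
  have \<sigma>_add: "\<sigma> (a + b) = \<sigma> a + \<sigma> b" and \<sigma>_diff: "\<sigma> (a - b) = \<sigma> a - \<sigma> b" for a b
    using freshmans_dream'[OF prime refl] freshmans_dream_minus[OF prime refl]
    unfolding \<sigma>_def CHAR by blast+
  have \<sigma>_mult: "\<sigma> (a * b) = \<sigma> a * \<sigma> b" and \<sigma>_power: "\<sigma> (a ^ k) = \<sigma> a ^ k"
    and \<sigma>_one: "\<sigma> 1 = 1" for a b k
    unfolding \<sigma>_def by (simp_all add: power_mult_distrib flip: power_mult) (simp add: mult.commute)
  have \<sigma>_\<sigma>: "\<sigma> (\<sigma> y) = y ^ p" and \<sigma>_inv: "\<sigma> (y ^ (p ^ l)) = y" for y
    unfolding \<sigma>_def using power_card_odd_exponent[OF card] by auto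
  have \<sigma>_e: "\<sigma> e = e"
    unfolding \<sigma>_def using power_power_eq_mod_period[of e p 1 "l + 1"] e by simp
  have "u * (u - \<sigma> u) = 1"
    using eq by (simp add: u_def \<sigma>_add \<sigma>_inv \<sigma>_e)
  then have rel: "\<sigma> u * u = u\<^sup>2 - 1"
    by algebra
  then show "u ^ (p ^ (l + 1)) * u = u\<^sup>2 - 1"
    unfolding \<sigma>_def .
  have "u ^ p * \<sigma> u = \<sigma> (\<sigma> u * u)"
    by (simp add: \<sigma>_mult \<sigma>_\<sigma>)
  also have "\<dots> = (\<sigma> u)\<^sup>2 - 1"
    unfolding rel \<sigma>_diff \<sigma>_power \<sigma>_one ..
  finally show "u ^ p * u ^ (p ^ (l + 1)) = (u ^ (p ^ (l + 1)))\<^sup>2 - 1"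
    unfolding \<sigma>_def .
qed

lemma char3_sextic_if_frobenius_system:
  fixes u z :: "'a::idom"
  assumes "(3::'a) = 0" and "z * u = u\<^sup>2 - 1" and "u ^ 3 * z = z\<^sup>2 - 1"
  shows "u ^ 6 + u ^ 4 = 1"
proof -
  have "u ^ 6 + u ^ 4 - 1 = u\<^sup>2 * (u ^ 3 * z - (z\<^sup>2 - 1))
      - (z * u - (u\<^sup>2 - 1)) * (u ^ 4 - (z * u - (u\<^sup>2 - 1)) - 2 * u\<^sup>2 + 2)
      + 3 * (u ^ 4 - u\<^sup>2)"
    by algebra
  then show ?thesis
    using assms by simp
qed

lemma char3_power_27_if_sextic:
  fixes u :: "'a::idom"
  assumes "(3::'a) = 0" and "u ^ 6 + u ^ 4 = 1"
  shows "u ^ 27 = u"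
proof -
  have "u ^ 27 - u = (u ^ 6 + u ^ 4 - 1) *
      (u + u ^ 5 + u ^ 7 + u ^ 9 + 2 * u ^ 11 + 2 * u ^ 13 + u ^ 17 + 2 * u ^ 19 + u ^ 21)
      - 3 * (u ^ 15 + u ^ 17 + u ^ 23 + u ^ 25)"
    by algebra
  then show ?thesis
    using assms by simp
qed

lemma char3_sextic_relation_ne_power:
  fixes u z :: "'a::idom"
  assumes three: "(3::'a) = 0" and sextic: "u ^ 6 + u ^ 4 = 1"
    and rel: "z * u = u\<^sup>2 - 1" and "r < 3"
  shows "z \<noteq> u ^ (3 ^ r)"
proof
  assume z: "z = u ^ (3 ^ r)"
  consider "r = 0" | "r = 1" | "r = 2"
    using \<open>r < 3\<close> by linarith
  then show False
  proof cases
    case 1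
    then show False
      using rel z by (simp add: power2_eq_square)
  next
    case 2
    then have "u ^ 3 * u = u\<^sup>2 - 1"
      using rel z by simp
    then have quartic: "u ^ 4 = u\<^sup>2 - 1"
      by algebra
    have "u\<^sup>2 = 3"
      using quartic sextic by algebra
    then show False
      using quartic three by (simp add: power_mult[of u 2 2, simplified])
  next
    case 3
    then have "u ^ 9 * u = u\<^sup>2 - 1"
      using rel z by simp
    then have "u ^ 10 - u\<^sup>2 + 1 = 0"
      by algebra
    moreover have "(1 + u\<^sup>2 + 2 * u ^ 4) * (u ^ 10 - u\<^sup>2 + 1)
        + (u ^ 4 + u ^ 6 + u ^ 8) * (u ^ 6 + u ^ 4 - 1)
        = 1 + 3 * (u ^ 10 + u ^ 12 + u ^ 14 - u ^ 6)"
      by algebra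
    ultimately show False
      using sextic three by simp
  qed
qed

theorem lemma1:
  fixes x e :: "'a::{field,finite}" and l m :: nat
  assumes "l \<ge> 1" and "m = 2 * l + 1"
    and "card (UNIV :: 'a set) = 3 ^ m"
    and "e \<in> {1, 2}"
    and "x \<noteq> 0"
  shows "(x ^ (3 ^ l) + e) * (x ^ (3 ^ l) - x) \<noteq> 1"
proof
  assume eq: "(x ^ (3 ^ l) + e) * (x ^ (3 ^ l) - x) = 1"
  have CHAR: "CHAR('a) = 3"
    using CHAR_eq_if_card_eq_prime_power[OF _ assms(3)] by simp
  then have three: "(3::'a) = 0"
    by (metis of_nat_CHAR of_nat_numeral)
  have "(2::'a) ^ 3 = 2 + 2 * 3"
    by simp
  then have "e ^ 3 = e"
    using assms(4) three by auto
  define u where "u = x ^ (3 ^ l) + e"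
  define z where "z = u ^ (3 ^ (l + 1))"
  have rel: "z * u = u\<^sup>2 - 1" and "u ^ 3 * z = z\<^sup>2 - 1"
    using frobenius_relations_if_equation[OF _ CHAR \<open>e ^ 3 = e\<close> eq] assms(2,3)
    unfolding u_def z_def by simp_all
  then have sextic: "u ^ 6 + u ^ 4 = 1"
    using char3_sextic_if_frobenius_system three by blast
  have "z = u ^ (3 ^ ((l + 1) mod 3))"
    unfolding z_def
    by (rule power_power_eq_mod_period) (simp add: char3_power_27_if_sextic[OF three sextic])
  then show False
    using char3_sextic_relation_ne_power[OF three sextic rel] by simp
qed

end
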